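(* Let $R$ be a ring. Let $P$ be a polygon divided into subpolygons $P^1$ and $P^2$ by the dissection $\{(t,v),(v,t)\}$; let $V^\alpha$ be the vertex set of $P^\alpha$ and $U^\alpha=V^\alpha\setminus\{t,v\}$. Let $D^\alpha$ be a dissection of $P^\alpha$ ($\alpha=1,2$) and $D=\{(t,v),(v,t)\}\,\dot\cup\,D^1\,\dot\cup\,D^2$. Let $c^\alpha:\operatorname{diag}P^\alpha\to R$ be a weak frieze with respect to $D^\alpha$ for $\alpha=1,2$, and assume $c^1_{tv}=c^2_{tv}$ and $c^1_{vt}=c^2_{vt}$, and that these elements lie in $R^*$. Then there exists a unique map $c:\operatorname{diag}P\to R$ such that (i) $c|_{\operatorname{diag}P^\alpha}=c^\alpha$ for $\alpha=1,2$, and (ii) $c$ is a weak frieze with respect to $D$. Explicitly, for distinct vertices $i,k$: $c_{ik}=c^1_{ik}$ if $i,k\in V^1$; $c_{ik}=c^2_{ik}$ if $i,k\in V^2$ (these agree when $i,k\in\{t,v\}$); $c_{ik}=c^1_{it}(c^1_{vt})^{-1}c^2_{vk}+c^1_{iv}(c^1_{tv})^{-1}c^2_{tk}$ if $i\in U^1$, $k\in U^2$; and $c_{ik}=c^2_{it}(c^2_{vt})^{-1}c^1_{vk}+c^2_{iv}(c^2_{tv})^{-1}c^1_{tk}$ if $i\in U^2$, $k\in U^1$.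
   Context: $R^*$ denotes the invertible elements of $R$. A polygon is a finite set of at least three vertices with a cyclic ordering (thought of as a convex polygon); a subpolygon is a subset of at least three vertices with induced cyclic ordering. $\operatorname{diag}P$ is the set of ordered pairs of distinct vertices. A diagonal is an edge if its endpoints are neighbours, otherwise internal. $(i,k)$ and $(j,\ell)$ cross if $i,j,k,\ell$ are pairwise distinct with $i<j<k<\ell$ or $i<\ell<k<j$ cyclically. A dissection is a set of internal diagonals closed under reversal with no two crossing; the internal diagonal pair $\{(t,v),(v,t)\}$ divides $P$ into the two subpolygons $P^1,P^2$ whose vertex sets are the vertices on either side of $(t,v)$ together with $t,v$. Write $c_{ik}=c(i,k)$, $c_{xx}=0$. A map $c:\operatorname{diag}P\to R$ is a weak frieze with respect to a dissection $D$ if $c_{rs}\in R^*$ for $(r,s)\in D$ and whenever $(i,k)$ crosses $(r,s)$ with $(r,s),(s,r)\in D$, $c_{ik}=c_{ir}c_{sr}^{-1}c_{sk}+c_{is}c_{rs}^{-1}c_{rk}$. *)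

theory Defs
  imports Main
begin

text \<open>Vertices are natural numbers; a polygon is a finite set of at least three
  naturals with the cyclic ordering induced by the usual order. A subpolygon
  carries the induced cyclic ordering, which is again the one induced by the
  natural order.\<close>

definition polygon :: "nat set \<Rightarrow> bool" where
  "polygon P \<longleftrightarrow> finite P \<and> card P \<ge> 3"

definition diag :: "nat set \<Rightarrow> (nat \<times> nat) set" where
  "diag P = {(i, k). i \<in> P \<and> k \<in> P \<and> i \<noteq> k}"

definition cyc3 :: "nat \<Rightarrow> nat \<Rightarrow> nat \<Rightarrow> bool" where
  "cyc3 a b c \<longleftrightarrow> (a < b \<and> b < c) \<or> (b < c \<and> c < a) \<or> (c < a \<and> a < b)"

definition cyc4 :: "nat \<Rightarrow> nat \<Rightarrow> nat \<Rightarrow> nat \<Rightarrow> bool" where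
  "cyc4 a b c d \<longleftrightarrow> cyc3 a b c \<and> cyc3 c d a"

definition crosses :: "nat \<times> nat \<Rightarrow> nat \<times> nat \<Rightarrow> bool" where
  "crosses d e \<longleftrightarrow> (case d of (i, k) \<Rightarrow> case e of (j, l) \<Rightarrow>
      distinct [i, j, k, l] \<and> (cyc4 i j k l \<or> cyc4 i l k j))"

definition is_edge :: "nat set \<Rightarrow> nat \<times> nat \<Rightarrow> bool" where
  "is_edge P d \<longleftrightarrow> (case d of (i, k) \<Rightarrow> (i, k) \<in> diag P \<and>
      ((\<not> (\<exists>j\<in>P. cyc3 i j k)) \<or> (\<not> (\<exists>j\<in>P. cyc3 k j i))))"

definition internal :: "nat set \<Rightarrow> nat \<times> nat \<Rightarrow> bool" where
  "internal P d \<longleftrightarrow> d \<in> diag P \<and> \<not> is_edge P d"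

definition dissection :: "nat set \<Rightarrow> (nat \<times> nat) set \<Rightarrow> bool" where
  "dissection P D \<longleftrightarrow> (\<forall>d\<in>D. internal P d) \<and> (\<forall>(i, k)\<in>D. (k, i) \<in> D)
      \<and> (\<forall>d\<in>D. \<forall>e\<in>D. \<not> crosses d e)"

definition side1 :: "nat set \<Rightarrow> nat \<Rightarrow> nat \<Rightarrow> nat set" where
  "side1 P t v = {t, v} \<union> {j \<in> P. cyc3 t j v}"

definition side2 :: "nat set \<Rightarrow> nat \<Rightarrow> nat \<Rightarrow> nat set" where
  "side2 P t v = {t, v} \<union> {j \<in> P. cyc3 v j t}"

definition is_unit :: "'a::ring_1 \<Rightarrow> bool" where
  "is_unit x \<longleftrightarrow> (\<exists>y. x * y = 1 \<and> y * x = 1)"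

definition ring_inv :: "'a::ring_1 \<Rightarrow> 'a" where
  "ring_inv x = (THE y. x * y = 1 \<and> y * x = 1)"

definition weak_frieze :: "nat set \<Rightarrow> (nat \<times> nat) set \<Rightarrow> (nat \<Rightarrow> nat \<Rightarrow> 'a::ring_1) \<Rightarrow> bool" where
  "weak_frieze P D c \<longleftrightarrow> (\<forall>(r, s)\<in>D. is_unit (c r s)) \<and>
     (\<forall>i k r s. (i, k) \<in> diag P \<and> (r, s) \<in> D \<and> (s, r) \<in> D \<and> crosses (i, k) (r, s) \<longrightarrow>
        c i k = c i r * ring_inv (c s r) * c s k + c i s * ring_inv (c r s) * c r k)"

end

(* A pair (i, k) not lying in one side has its ends inside opposite sides, so it crosses (t, v),
   and the exchange relation for (t, v) forces the stated formula for c i k; this gives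
   uniqueness. For existence, take that formula as the definition. Against a diagonal (r, s)
   of D1 the formula is linear in c1 i t and c1 i v (or in c1 t k and c1 v k), and expanding
   these by the exchange relation of c1 for (r, s) yields the exchange relation of the glued
   map. Diagonals of D2 are handled by exchanging the roles of the two sides. *)
theory Submission
  imports Defs
begin

definition on_arc :: "nat \<Rightarrow> nat \<Rightarrow> nat \<Rightarrow> bool" where
  "on_arc a b x \<longleftrightarrow> x = a \<or> x = b \<or> cyc3 a x b"

(* Moving the comparisons from nat to int lets smt decide cyclic-order facts quickly. *)
lemmas cyclic_order_unfold = on_arc_def crosses_def cyc4_def cyc3_def prod.case distinct.simps
  list.set insert_iff empty_iff Diff_iff simp_thms
  of_nat_less_iff[where 'a=int, symmetric] of_nat_eq_iff[where 'a=int, symmetric]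

lemma crosses_commute_left: "crosses (i, k) e \<longleftrightarrow> crosses (k, i) e"
  by (cases e) (auto simp: crosses_def cyc4_def)

lemma crosses_commute_right: "crosses d (r, s) \<longleftrightarrow> crosses d (s, r)"
  by (cases d) (auto simp: crosses_def cyc4_def)

lemma crosses_distinct: "crosses (i, k) (r, s) \<Longrightarrow> distinct [i, k, r, s]"
  by (auto simp: crosses_def)

lemma crosses_iff_opposite_arcs:
  "crosses (i, k) (t, v) \<longleftrightarrow> (cyc3 t i v \<and> cyc3 v k t) \<or> (cyc3 v i t \<and> cyc3 t k v)"
  unfolding cyclic_order_unfold by (smt (z3))

lemma chords_on_opposite_arcs_not_cross:
  assumes "on_arc t v r" "on_arc t v s" "on_arc v t i" "on_arc v t k"
  shows "\<not> crosses (i, k) (r, s)"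
  using assms unfolding cyclic_order_unfold by (smt (z3))

lemma crosses_move_to_arc_end:
  assumes "cyc3 t i v" "cyc3 v k t" "on_arc t v r" "on_arc t v s" "crosses (i, k) (r, s)"
    and "w \<in> {t, v} - {r, s}"
  shows "crosses (i, w) (r, s)"
  using assms unfolding cyclic_order_unfold by (smt (z3))

lemma side1_eq: "t \<in> P \<Longrightarrow> v \<in> P \<Longrightarrow> side1 P t v = {x \<in> P. on_arc t v x}"
  by (auto simp: side1_def on_arc_def)

lemma side2_eq_side1: "side2 P t v = side1 P v t"
  by (auto simp: side1_def side2_def)

lemma side1_Un_side2: "t \<in> P \<Longrightarrow> v \<in> P \<Longrightarrow> t \<noteq> v \<Longrightarrow> side1 P t v \<union> side2 P t v = P"
  by (auto simp: side1_def side2_def cyc3_def)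

lemma side1_Int_side2: "side1 P t v \<inter> side2 P t v = {t, v}"
  by (auto simp: side1_def side2_def cyc3_def)

lemma is_unit_ring_inv:
  assumes "is_unit x"
  shows "x * ring_inv x = 1" and "ring_inv x * x = 1"
proof -
  obtain y where y: "x * y = 1" "y * x = 1"
    using assms unfolding is_unit_def by blast
  have "z = y" if "x * z = 1" "z * x = 1" for z
    by (metis mult.assoc mult_1_left mult_1_right that(2) y(1))
  then have "ring_inv x = y"
    unfolding ring_inv_def using y by blast
  with y show "x * ring_inv x = 1" "ring_inv x * x = 1" by auto
qed

lemma is_unit_cancel:
  assumes "is_unit x"
  shows "x * (ring_inv x * y) = y" and "ring_inv x * (x * y) = y"
  using is_unit_ring_inv[OF assms] by (simp_all flip: mult.assoc)

definition frieze_relation :: "(nat \<Rightarrow> nat \<Rightarrow> 'a::ring_1) \<Rightarrow> nat \<Rightarrow> nat \<Rightarrow> nat \<Rightarrow> nat \<Rightarrow> bool" where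
  "frieze_relation c i k r s \<longleftrightarrow>
     c i k = c i r * ring_inv (c s r) * c s k + c i s * ring_inv (c r s) * c r k"

lemma frieze_relation_commute: "frieze_relation c i k r s \<longleftrightarrow> frieze_relation c i k s r"
  by (auto simp: frieze_relation_def add.commute)

lemma frieze_relation_transfer:
  assumes "frieze_relation c i k r s" "distinct [i, k, r, s]"
    and "\<And>x y. x \<in> {i, k, r, s} \<Longrightarrow> y \<in> {i, k, r, s} \<Longrightarrow> x \<noteq> y \<Longrightarrow> d x y = c x y"
  shows "frieze_relation d i k r s"
  using assms by (simp add: frieze_relation_def)

lemma weak_frieze_unit: "weak_frieze S D c \<Longrightarrow> (r, s) \<in> D \<Longrightarrow> is_unit (c r s)"
  by (auto simp: weak_frieze_def)

lemma weak_frieze_relation: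
  "weak_frieze S D c \<Longrightarrow> (i, k) \<in> diag S \<Longrightarrow> (r, s) \<in> D \<Longrightarrow> (s, r) \<in> D \<Longrightarrow>
    crosses (i, k) (r, s) \<Longrightarrow> frieze_relation c i k r s"
  unfolding weak_frieze_def frieze_relation_def by blast

lemma weak_frieze_iff:
  "weak_frieze S D c \<longleftrightarrow> (\<forall>(r, s)\<in>D. is_unit (c r s)) \<and>
     (\<forall>i k r s. (i, k) \<in> diag S \<and> (r, s) \<in> D \<and> (s, r) \<in> D \<and> crosses (i, k) (r, s) \<longrightarrow>
        frieze_relation c i k r s)"
  unfolding weak_frieze_def frieze_relation_def ..

(* The values c x x are irrelevant to friezes; setting them to 0 makes the exchange relation
   hold trivially whenever i or k is an end of (r, s). *)
definition hollow :: "(nat \<Rightarrow> nat \<Rightarrow> 'a::zero) \<Rightarrow> nat \<Rightarrow> nat \<Rightarrow> 'a" where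
  "hollow c i k = (if i = k then 0 else c i k)"

lemma frieze_relation_hollow_iff:
  "distinct [i, k, r, s] \<Longrightarrow> frieze_relation (hollow c) i k r s \<longleftrightarrow> frieze_relation c i k r s"
  by (simp add: frieze_relation_def hollow_def)

lemma frieze_relation_hollow_at_end:
  assumes "r \<noteq> s" "is_unit (c r s)" "is_unit (c s r)" "i \<in> {r, s} \<or> k \<in> {r, s}"
  shows "frieze_relation (hollow c) i k r s"
  using assms(1,4)
  by (auto simp: frieze_relation_def hollow_def mult.assoc is_unit_ring_inv assms(2,3)
      is_unit_cancel)

definition glue :: "nat set \<Rightarrow> nat \<Rightarrow> nat \<Rightarrow> (nat \<Rightarrow> nat \<Rightarrow> 'a::ring_1) \<Rightarrow> (nat \<Rightarrow> nat \<Rightarrow> 'a) \<Rightarrow>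
    nat \<Rightarrow> nat \<Rightarrow> 'a" where
  "glue P t v c1 c2 i k =
    (if i \<in> side1 P t v \<and> k \<in> side1 P t v then c1 i k
     else if i \<in> side2 P t v \<and> k \<in> side2 P t v then c2 i k
     else if i \<in> side1 P t v
       then c1 i t * ring_inv (c1 v t) * c2 v k + c1 i v * ring_inv (c1 t v) * c2 t k
     else c2 i t * ring_inv (c2 v t) * c1 v k + c2 i v * ring_inv (c2 t v) * c1 t k)"

locale glued_friezes =
  fixes P :: "nat set" and t v :: nat and c1 c2 :: "nat \<Rightarrow> nat \<Rightarrow> 'a::ring_1"
    and D1 D2 :: "(nat \<times> nat) set"
  assumes t_in_P: "t \<in> P" and v_in_P: "v \<in> P" and t_neq_v: "t \<noteq> v"
    and dissection1: "dissection (side1 P t v) D1"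
    and dissection2: "dissection (side2 P t v) D2"
    and frieze1: "weak_frieze (side1 P t v) D1 c1"
    and frieze2: "weak_frieze (side2 P t v) D2 c2"
    and agree_tv: "c1 t v = c2 t v" and agree_vt: "c1 v t = c2 v t"
    and unit_tv: "is_unit (c1 t v)" and unit_vt: "is_unit (c1 v t)"
begin

abbreviation "S1 \<equiv> side1 P t v"
abbreviation "S2 \<equiv> side2 P t v"
abbreviation "c \<equiv> glue P t v c1 c2"

lemma glued_friezes_swap: "glued_friezes P v t c2 c1 D2 D1"
  using t_in_P v_in_P t_neq_v dissection1 dissection2 frieze1 frieze2 agree_tv agree_vt
    unit_tv unit_vt
  by unfold_locales (simp_all add: side2_eq_side1)

lemma mem_S1: "x \<in> S1 \<longleftrightarrow> x \<in> P \<and> on_arc t v x"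
  using side1_eq[OF t_in_P v_in_P] by blast

lemma mem_S2: "x \<in> S2 \<longleftrightarrow> x \<in> P \<and> on_arc v t x"
  using side1_eq[OF v_in_P t_in_P] by (simp add: side2_eq_side1)

lemma mem_S1_interior: "x \<in> S1 - {t, v} \<longleftrightarrow> x \<in> P \<and> cyc3 t x v"
  by (auto simp: mem_S1 on_arc_def cyc3_def)

lemma mem_S2_interior: "x \<in> S2 - {t, v} \<longleftrightarrow> x \<in> P \<and> cyc3 v x t"
  by (auto simp: mem_S2 on_arc_def cyc3_def)

lemma ends_in_sides: "t \<in> S1" "v \<in> S1" "t \<in> S2" "v \<in> S2"
  by (auto simp: side1_def side2_def)

lemma crosses_tv_iff:
  "crosses (i, k) (t, v) \<longleftrightarrow>
     (i \<in> S1 - {t, v} \<and> k \<in> S2 - {t, v}) \<or> (i \<in> S2 - {t, v} \<and> k \<in> S1 - {t, v})"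
  if "i \<in> P" "k \<in> P"
  unfolding crosses_iff_opposite_arcs mem_S1_interior mem_S2_interior using that by blast

lemma diag_cases:
  assumes "(i, k) \<in> diag P"
  obtains "(i, k) \<in> diag S1" | "(i, k) \<in> diag S2" | "crosses (i, k) (t, v)"
proof -
  have "i \<in> S1 \<union> S2" "k \<in> S1 \<union> S2"
    using assms side1_Un_side2[OF t_in_P v_in_P t_neq_v] by (auto simp: diag_def)
  then show ?thesis
    using that assms side1_Int_side2[of P t v] by (auto simp: diag_def crosses_tv_iff)
qed

lemma c1_eq_c2_on_common_diag:
  assumes "x \<in> S1" "y \<in> S1" "x \<in> S2" "y \<in> S2" "x \<noteq> y"
  shows "c1 x y = c2 x y"
proof -
  have "x \<in> {t, v}" "y \<in> {t, v}"
    using assms side1_Int_side2[of P t v] by blast+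
  with \<open>x \<noteq> y\<close> show ?thesis
    using agree_tv agree_vt by auto
qed

lemma glue_side1: "x \<in> S1 \<Longrightarrow> y \<in> S1 \<Longrightarrow> c x y = c1 x y"
  by (simp add: glue_def)

lemma glue_side2: "x \<in> S2 \<Longrightarrow> y \<in> S2 \<Longrightarrow> x \<noteq> y \<Longrightarrow> c x y = c2 x y"
  by (auto simp: glue_def c1_eq_c2_on_common_diag)

lemma glue_across:
  assumes "x \<in> S1 - {t, v}" "y \<in> S2 - {t, v}"
  shows "c x y = c1 x t * ring_inv (c1 v t) * c2 v y + c1 x v * ring_inv (c1 t v) * c2 t y"
    and "c y x = c2 y t * ring_inv (c2 v t) * c1 v x + c2 y v * ring_inv (c2 t v) * c1 t x"
  using assms side1_Int_side2[of P t v] by (auto simp: glue_def)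

lemma glue_swap: "x \<in> P \<Longrightarrow> y \<in> P \<Longrightarrow> x \<noteq> y \<Longrightarrow> glue P v t c2 c1 x y = c x y"
  using side1_Un_side2[OF t_in_P v_in_P t_neq_v] agree_tv agree_vt
  by (auto simp: glue_def side2_eq_side1[symmetric] add.commute c1_eq_c2_on_common_diag)

lemma glue_across_hollow_right:
  assumes "x \<in> S1" "k \<in> S2 - {t, v}"
  shows "c x k = hollow c1 x t * (ring_inv (c1 v t) * c2 v k)
    + hollow c1 x v * (ring_inv (c1 t v) * c2 t k)"
proof -
  consider "x = t" | "x = v" | "x \<in> S1 - {t, v}"
    using assms(1) by blast
  then show ?thesis
  proof cases
    case 1
    then show ?thesis
      using assms t_neq_v ends_in_sides
      by (simp add: glue_side2 hollow_def is_unit_cancel[OF unit_tv])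
  next
    case 2
    then show ?thesis
      using assms t_neq_v ends_in_sides
      by (simp add: glue_side2 hollow_def is_unit_cancel[OF unit_vt])
  next
    case 3
    then show ?thesis
      using assms glue_across(1) by (auto simp: hollow_def mult.assoc)
  qed
qed

lemma glue_across_hollow_left:
  assumes "i \<in> S2 - {t, v}" "x \<in> S1"
  shows "c i x = c2 i t * ring_inv (c1 v t) * hollow c1 v x
    + c2 i v * ring_inv (c1 t v) * hollow c1 t x"
proof -
  consider "x = t" | "x = v" | "x \<in> S1 - {t, v}"
    using assms(2) by blast
  then show ?thesis
  proof cases
    case 1
    then show ?thesis
      using assms t_neq_v ends_in_sides
      by (simp add: glue_side2 hollow_def mult.assoc is_unit_ring_inv[OF unit_vt])
  next
    case 2
    then show ?thesis
      using assms t_neq_v ends_in_sides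
      by (simp add: glue_side2 hollow_def mult.assoc is_unit_ring_inv[OF unit_tv])
  next
    case 3
    then show ?thesis
      using assms glue_across(2) agree_tv agree_vt by (auto simp: hollow_def)
  qed
qed

lemma D1_diagonal:
  assumes "(r, s) \<in> D1"
  shows "(s, r) \<in> D1" and "r \<in> S1" and "s \<in> S1" and "r \<noteq> s"
    and "is_unit (c1 r s)" and "is_unit (c1 s r)"
proof -
  show sr: "(s, r) \<in> D1"
    using dissection1 assms unfolding dissection_def by blast
  have "internal S1 (r, s)"
    using dissection1 assms unfolding dissection_def by blast
  then show "r \<in> S1" "s \<in> S1" "r \<noteq> s"
    by (auto simp: internal_def diag_def)
  show "is_unit (c1 r s)" "is_unit (c1 s r)"
    using weak_frieze_unit[OF frieze1] assms sr by blast+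
qed

lemma frieze_relation_hollow_to_end:
  assumes rs: "(r, s) \<in> D1" and i: "i \<in> S1 - {t, v}" and k: "k \<in> S2 - {t, v}"
    and cross: "crosses (i, k) (r, s)" and w: "w \<in> {t, v}"
  shows "frieze_relation (hollow c1) i w r s" and "frieze_relation (hollow c1) w i r s"
proof -
  have "frieze_relation (hollow c1) i w r s \<and> frieze_relation (hollow c1) w i r s"
  proof (cases "w \<in> {r, s}")
    case True
    then show ?thesis
      using D1_diagonal[OF rs] by (simp add: frieze_relation_hollow_at_end)
  next
    case False
    have "on_arc t v r" "on_arc t v s"
      using D1_diagonal(2,3)[OF rs] by (simp_all add: mem_S1)
    moreover have "cyc3 t i v" "cyc3 v k t"
      using i k mem_S1_interior mem_S2_interior by blast+
    ultimately have cross_w: "crosses (i, w) (r, s)"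
      using crosses_move_to_arc_end cross w False by blast
    moreover have "(i, w) \<in> diag S1" "(w, i) \<in> diag S1"
      using i w ends_in_sides by (auto simp: diag_def)
    ultimately have "frieze_relation c1 i w r s" "frieze_relation c1 w i r s"
      using weak_frieze_relation[OF frieze1 _ rs D1_diagonal(1)[OF rs]] crosses_commute_left
      by blast+
    moreover have "distinct [i, w, r, s]" "distinct [w, i, r, s]"
      using crosses_distinct[OF cross_w] by auto
    ultimately show ?thesis
      by (simp add: frieze_relation_hollow_iff)
  qed
  then show "frieze_relation (hollow c1) i w r s" "frieze_relation (hollow c1) w i r s"
    by blast+
qed

lemma frieze_relation_glue_D1_S1_S2:
  assumes rs: "(r, s) \<in> D1" and i: "i \<in> S1 - {t, v}" and k: "k \<in> S2 - {t, v}"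
    and cross: "crosses (i, k) (r, s)"
  shows "frieze_relation c i k r s"
proof -
  let ?h = "hollow c1" and ?X = "ring_inv (c1 s r)" and ?Y = "ring_inv (c1 r s)"
  let ?Mt = "ring_inv (c1 v t) * c2 v k" and ?Mv = "ring_inv (c1 t v) * c2 t k"
  have r: "r \<in> S1" and s: "s \<in> S1" and "r \<noteq> s"
    using D1_diagonal[OF rs] by blast+
  have "i \<noteq> r" "i \<noteq> s"
    using crosses_distinct[OF cross] by auto
  have expand: "?h i w = ?h i r * ?X * ?h s w + ?h i s * ?Y * ?h r w" if "w \<in> {t, v}" for w
    using frieze_relation_hollow_to_end(1)[OF rs i k cross that] \<open>r \<noteq> s\<close>
    by (simp add: frieze_relation_def hollow_def)
  have "c i k = ?h i t * ?Mt + ?h i v * ?Mv"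
    using glue_across_hollow_right i k by blast
  also have "\<dots> = (?h i r * ?X * ?h s t + ?h i s * ?Y * ?h r t) * ?Mt
      + (?h i r * ?X * ?h s v + ?h i s * ?Y * ?h r v) * ?Mv"
    using expand[of t] expand[of v] by simp
  also have "\<dots> = ?h i r * ?X * (?h s t * ?Mt + ?h s v * ?Mv)
      + ?h i s * ?Y * (?h r t * ?Mt + ?h r v * ?Mv)"
    by (simp add: algebra_simps)
  also have "\<dots> = c i r * ring_inv (c s r) * c s k + c i s * ring_inv (c r s) * c r k"
    using glue_across_hollow_right[OF r k] glue_across_hollow_right[OF s k] i r s
      \<open>i \<noteq> r\<close> \<open>i \<noteq> s\<close> by (simp add: glue_side1 hollow_def)
  finally show ?thesis
    unfolding frieze_relation_def .
qed

lemma frieze_relation_glue_D1_S2_S1: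
  assumes rs: "(r, s) \<in> D1" and i: "i \<in> S2 - {t, v}" and k: "k \<in> S1 - {t, v}"
    and cross: "crosses (i, k) (r, s)"
  shows "frieze_relation c i k r s"
proof -
  let ?h = "hollow c1" and ?X = "ring_inv (c1 s r)" and ?Y = "ring_inv (c1 r s)"
  let ?Lt = "c2 i t * ring_inv (c1 v t)" and ?Lv = "c2 i v * ring_inv (c1 t v)"
  have r: "r \<in> S1" and s: "s \<in> S1" and "r \<noteq> s"
    using D1_diagonal[OF rs] by blast+
  have "k \<noteq> r" "k \<noteq> s"
    using crosses_distinct[OF cross] by auto
  have "crosses (k, i) (r, s)"
    using cross crosses_commute_left by blast
  then have expand: "?h w k = ?h w r * ?X * ?h s k + ?h w s * ?Y * ?h r k" if "w \<in> {t, v}" for w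
    using frieze_relation_hollow_to_end(2)[OF rs k i _ that] \<open>r \<noteq> s\<close>
    by (simp add: frieze_relation_def hollow_def)
  have "c i k = ?Lt * ?h v k + ?Lv * ?h t k"
    using glue_across_hollow_left i k by (simp add: mult.assoc)
  also have "\<dots> = ?Lt * (?h v r * ?X * ?h s k + ?h v s * ?Y * ?h r k)
      + ?Lv * (?h t r * ?X * ?h s k + ?h t s * ?Y * ?h r k)"
    using expand[of t] expand[of v] by simp
  also have "\<dots> = (?Lt * ?h v r + ?Lv * ?h t r) * ?X * ?h s k
      + (?Lt * ?h v s + ?Lv * ?h t s) * ?Y * ?h r k"
    by (simp add: algebra_simps)
  also have "\<dots> = c i r * ring_inv (c s r) * c s k + c i s * ring_inv (c r s) * c r k"
    using glue_across_hollow_left[OF i r] glue_across_hollow_left[OF i s] k r s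
      \<open>k \<noteq> r\<close> \<open>k \<noteq> s\<close> by (simp add: glue_side1 hollow_def mult.assoc)
  finally show ?thesis
    unfolding frieze_relation_def .
qed

lemma frieze_relation_glue_D1:
  assumes rs: "(r, s) \<in> D1" and ik: "(i, k) \<in> diag P" and cross: "crosses (i, k) (r, s)"
  shows "frieze_relation c i k r s"
  using ik
proof (cases rule: diag_cases)
  case 1
  have "{i, k, r, s} \<subseteq> S1"
    using 1 D1_diagonal(2,3)[OF rs] by (auto simp: diag_def)
  then show ?thesis
    using glue_side1
    by (intro frieze_relation_transfer[OF weak_frieze_relation[OF frieze1 1 rs _ cross]]
        crosses_distinct[OF cross] D1_diagonal(1)[OF rs]) blast+
next
  case 2
  have "on_arc t v r" "on_arc t v s"
    using D1_diagonal(2,3)[OF rs] by (simp_all add: mem_S1)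
  moreover have "on_arc v t i" "on_arc v t k"
    using 2 by (simp_all add: diag_def mem_S2)
  ultimately show ?thesis
    using chords_on_opposite_arcs_not_cross cross by blast
next
  case 3
  then show ?thesis
    using ik crosses_tv_iff frieze_relation_glue_D1_S1_S2[OF rs _ _ cross]
      frieze_relation_glue_D1_S2_S1[OF rs _ _ cross]
    by (auto simp: diag_def)
qed

lemma frieze_relation_glue_tv:
  assumes ik: "(i, k) \<in> diag P" and cross: "crosses (i, k) (t, v)"
  shows "frieze_relation c i k t v"
proof -
  have "i \<in> P" "k \<in> P"
    using ik by (auto simp: diag_def)
  then consider "i \<in> S1 - {t, v}" "k \<in> S2 - {t, v}" | "i \<in> S2 - {t, v}" "k \<in> S1 - {t, v}"
    using cross crosses_tv_iff by blast
  then show ?thesis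
  proof cases
    case 1
    then show ?thesis
      using glue_across(1)[OF 1] t_neq_v ends_in_sides
      by (auto simp: frieze_relation_def glue_side1 glue_side2)
  next
    case 2
    then show ?thesis
      using glue_across(2)[OF 2(2,1)] t_neq_v ends_in_sides agree_tv agree_vt
      by (auto simp: frieze_relation_def glue_side1 glue_side2)
  qed
qed

lemma frieze_relation_glue_D2:
  assumes rs: "(r, s) \<in> D2" and ik: "(i, k) \<in> diag P" and cross: "crosses (i, k) (r, s)"
  shows "frieze_relation c i k r s"
proof -
  interpret swapped: glued_friezes P v t c2 c1 D2 D1
    by (rule glued_friezes_swap)
  have "{i, k, r, s} \<subseteq> P"
    using ik swapped.D1_diagonal(2,3)[OF rs] by (auto simp: diag_def swapped.mem_S1)
  then show ?thesis
    using glue_swap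
    by (intro frieze_relation_transfer[OF swapped.frieze_relation_glue_D1[OF rs ik cross]]
        crosses_distinct[OF cross]) (metis subsetD)
qed

lemma weak_frieze_glue: "weak_frieze P ({(t, v), (v, t)} \<union> D1 \<union> D2) c"
proof -
  interpret swapped: glued_friezes P v t c2 c1 D2 D1
    by (rule glued_friezes_swap)
  have "is_unit (c r s)" if "(r, s) \<in> {(t, v), (v, t)} \<union> D1 \<union> D2" for r s
    using that
  proof (elim UnE insertE)
    assume "(r, s) \<in> D2"
    then show ?thesis
      using swapped.D1_diagonal[of r s] by (simp add: glue_side2 side2_eq_side1)
  qed (use unit_tv unit_vt ends_in_sides D1_diagonal[of r s] in \<open>auto simp: glue_side1\<close>)
  moreover have "frieze_relation c i k r s"
    if "(i, k) \<in> diag P" "(r, s) \<in> {(t, v), (v, t)} \<union> D1 \<union> D2" "crosses (i, k) (r, s)"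
    for i k r s
    using that frieze_relation_glue_tv frieze_relation_commute crosses_commute_right
      frieze_relation_glue_D1 frieze_relation_glue_D2
    by blast
  ultimately show ?thesis
    unfolding weak_frieze_iff by blast
qed

lemma glue_unique:
  assumes on_S1: "\<forall>(i, k)\<in>diag S1. c' i k = c1 i k" and on_S2: "\<forall>(i, k)\<in>diag S2. c' i k = c2 i k"
    and frieze: "weak_frieze P ({(t, v), (v, t)} \<union> D1 \<union> D2) c'" and ik: "(i, k) \<in> diag P"
  shows "c' i k = c i k"
proof -
  have on_sides: "c' x y = c x y" if "(x, y) \<in> diag S1 \<union> diag S2" for x y
    using that on_S1 on_S2 by (auto simp: diag_def glue_side1 glue_side2)
  show ?thesis
    using ik
  proof (cases rule: diag_cases)
    case 3
    have "distinct [i, k, t, v]"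
      using crosses_distinct[OF 3] .
    have "i \<in> S1 \<union> S2" "k \<in> S1 \<union> S2"
      using ik side1_Un_side2[OF t_in_P v_in_P t_neq_v] by (auto simp: diag_def)
    then have to_ends: "c' x w = c x w" "c' w x = c w x"
      if "x \<in> {i, k, t, v}" "w \<in> {t, v}" "x \<noteq> w" for x w
      using that ends_in_sides by (auto intro!: on_sides simp: diag_def)
    have "c' i k = c' i t * ring_inv (c' v t) * c' v k + c' i v * ring_inv (c' t v) * c' t k"
      using weak_frieze_relation[OF frieze ik _ _ 3] unfolding frieze_relation_def by blast
    also have "\<dots> = c i t * ring_inv (c v t) * c v k + c i v * ring_inv (c t v) * c t k"
      using \<open>distinct [i, k, t, v]\<close> by (simp add: to_ends)
    also have "\<dots> = c i k"
      using frieze_relation_glue_tv[OF ik 3] unfolding frieze_relation_def by simp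
    finally show ?thesis .
  qed (use on_sides in auto)
qed

end

theorem lemma2p6:
  fixes P :: "nat set" and t v :: nat
    and c1 c2 :: "nat \<Rightarrow> nat \<Rightarrow> 'a::ring_1"
  fixes D1 D2 :: "(nat \<times> nat) set"
  assumes "polygon P"
    and "dissection P {(t, v), (v, t)}"
    and "dissection (side1 P t v) D1"
    and "dissection (side2 P t v) D2"
    and "weak_frieze (side1 P t v) D1 c1"
    and "weak_frieze (side2 P t v) D2 c2"
    and "c1 t v = c2 t v" and "c1 v t = c2 v t"
    and "is_unit (c1 t v)" and "is_unit (c1 v t)"
  shows "\<exists>c. (\<forall>(i, k)\<in>diag (side1 P t v). c i k = c1 i k)
           \<and> (\<forall>(i, k)\<in>diag (side2 P t v). c i k = c2 i k)
           \<and> weak_frieze P ({(t, v), (v, t)} \<union> D1 \<union> D2) c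
           \<and> (\<forall>i\<in>side1 P t v - {t, v}. \<forall>k\<in>side2 P t v - {t, v}.
                c i k = c1 i t * ring_inv (c1 v t) * c2 v k + c1 i v * ring_inv (c1 t v) * c2 t k
              \<and> c k i = c2 k t * ring_inv (c2 v t) * c1 v i + c2 k v * ring_inv (c2 t v) * c1 t i)
           \<and> (\<forall>c'. (\<forall>(i, k)\<in>diag (side1 P t v). c' i k = c1 i k)
                 \<and> (\<forall>(i, k)\<in>diag (side2 P t v). c' i k = c2 i k)
                 \<and> weak_frieze P ({(t, v), (v, t)} \<union> D1 \<union> D2) c'
                 \<longrightarrow> (\<forall>(i, k)\<in>diag P. c' i k = c i k))"
proof -
  have "internal P (t, v)"
    using assms(2) unfolding dissection_def by blast
  then have "t \<in> P" "v \<in> P" "t \<noteq> v"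
    by (auto simp: internal_def diag_def)
  then interpret glued_friezes P t v c1 c2 D1 D2
    using assms(3-) by unfold_locales
  show ?thesis
  proof (intro exI conjI)
    show "\<forall>(i, k)\<in>diag S1. c i k = c1 i k" "\<forall>(i, k)\<in>diag S2. c i k = c2 i k"
      by (auto simp: diag_def glue_side1 glue_side2)
    show "weak_frieze P ({(t, v), (v, t)} \<union> D1 \<union> D2) c"
      by (rule weak_frieze_glue)
    show "\<forall>i\<in>S1 - {t, v}. \<forall>k\<in>S2 - {t, v}.
        c i k = c1 i t * ring_inv (c1 v t) * c2 v k + c1 i v * ring_inv (c1 t v) * c2 t k
      \<and> c k i = c2 k t * ring_inv (c2 v t) * c1 v i + c2 k v * ring_inv (c2 t v) * c1 t i"
      using glue_across by blast
    show "\<forall>c'. (\<forall>(i, k)\<in>diag S1. c' i k = c1 i k) \<and> (\<forall>(i, k)\<in>diag S2. c' i k = c2 i k)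
        \<and> weak_frieze P ({(t, v), (v, t)} \<union> D1 \<union> D2) c' \<longrightarrow> (\<forall>(i, k)\<in>diag P. c' i k = c i k)"
      using glue_unique by blast
  qed
qed

end
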